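(* Let $n\ge3$, $\boldsymbol\ell$ positive lengths, and $\xi$, $N>0$ smooth functions on $T^n$ depending only on $s^1$ with $\int_{T^n}\xi N\,dV_{\boldsymbol\ell}=0$; let $\mu,\tau^*\in\mathbb{R}$. Suppose either (a) $\mu,\tau^*$ are nonzero with the same sign and $c=(\mu/\tau^* )^{1/q}$, or (b) $\mu=\tau^*=0$ and $c>0$ is arbitrary. Let $r=c^{(q-2)/2}$, $\bar\tau=\tau^*+c^{-2q}\xi$, and let $(\bar g,\bar K)=(g_{r\boldsymbol\ell},\ \bar\tau(r\ell_1)^2(ds^1)^2)$ be the solution of the constraint equations generated (via the CTS-H$^*$ method with $\phi\equiv c$) by the data $(g_{\boldsymbol\ell},\mu\sigma^\flat_{\boldsymbol\ell},\tau^*,\xi,N)$. Let $$\tau^\circ=\frac{\int_{T^n}\bar\tau\,dV_{\bar g}}{\int_{T^n}1\,dV_{\bar g}},\qquad \hat{\boldsymbol\ell}=(r\ell_2,\ldots,r\ell_n).$$ If $\tau^\circ\neq0$, then $\bar g,\bar K$ are the induced metric and second fundamental form of a simple product embedding into the flat Kasner spacetime $\mathcal K_\Psi\times T^{n-1}_{\hat{\boldsymbol\ell}}$ with $\Psi=(r\ell_1)\tau^\circ$. If $\tau^\circ=0$, then $\bar g,\bar K$ are induced by a simple product embedding into a static toroidal spacetime $\mathcal C_L\times T^{n-1}_{\hat{\boldsymbol\ell}}$ for some $L>0$.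
   Context: $q=\frac{2n}{n-2}$, $\kappa=\frac{n-1}{n}$. $T^n=(\mathbb{R}/\mathbb{Z})^n$, unit coordinates $(s^1,\ldots,s^n)$; $g_{\boldsymbol\ell}=\sum_k\ell_k^2(ds^k)^2$, volume form $dV_{\boldsymbol\ell}$; $T^m_{\hat{\boldsymbol\ell}}$ is $T^m$ with $g_{\hat{\boldsymbol\ell}}$; $\sigma^\flat_{\boldsymbol\ell}=\kappa\ell_1^2(ds^1)^2-\frac1n\sum_{k\ge2}\ell_k^2(ds^k)^2$. CTS-H$^*$ method: for data $(g,\sigma,\tau^*,\xi,N)$ a solution is $(\phi>0,W)$ such that $\bar g=\phi^{q-2}g$, $\bar K=\phi^{-2}(\sigma+\frac1{2N}(L_Wg-\frac2n(\mathrm{div}W)g))+\frac{\tau^*+\phi^{-2q}\xi}{n}\bar g$ solves the Einstein constraint equations. $\mathbb{R}^{1,1}$: coordinates $(t,x)$, metric $-dt^2+dx^2$, time-oriented by $\partial_t$, $I_\pm=\{\pm t>|x|\}$; $B_\Psi$ the linear boost with matrix $\begin{pmatrix}\cosh\Psi&\sinh\Psi\\\sinh\Psi&\cosh\Psi\end{pmatrix}$; $\mathcal K_\Psi=I_+/\langle B_\Psi\rangle$ ($\Psi>0$) or $I_-/\langle B_\Psi\rangle$ ($\Psi<0$); $\mathcal C_L=\mathbb{R}^{1,1}/\langle(t,x)\mapsto(t,x+L)\rangle$. Products carry product Lorentzian metrics. A simple product embedding is $\iota(s^1,\ldots,s^n)=(\gamma(s^1),(s^2,\ldots,s^n))$ for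 a curve $\gamma$ in the 2-dimensional factor. Second fundamental form: $K(X,Y)=-\langle n,\nabla_XY\rangle$, $n$ the future unit normal. *)

theory Defs
  imports "HOL-Analysis.Analysis"
begin

definition smooth_real :: "(real \<Rightarrow> real) \<Rightarrow> bool" where
  "smooth_real f \<longleftrightarrow> (\<forall>k x. ((deriv ^^ k) f) differentiable (at x))"

text \<open>Points of T^n are represented by coordinate functions s :: nat => real
  (coordinates s 1, ..., s n in [0,1]).\<close>

definition torus_metric :: "nat \<Rightarrow> (nat \<Rightarrow> real) \<Rightarrow> nat \<Rightarrow> nat \<Rightarrow> real" where
  "torus_metric n l i j = (if i = j \<and> i \<in> {1..n} then (l i)^2 else 0)"

definition torus_integral :: "nat \<Rightarrow> (nat \<Rightarrow> real) \<Rightarrow> ((nat \<Rightarrow> real) \<Rightarrow> real) \<Rightarrow> real" where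
  "torus_integral n l F =
     (\<Prod>k\<in>{1..n}. l k) *
     integral\<^sup>L (PiM {1..n} (\<lambda>_. restrict_space lborel {0..1::real})) F"

definition mink :: "real \<times> real \<Rightarrow> real \<times> real \<Rightarrow> real" where
  "mink u v = - fst u * fst v + snd u * snd v"

definition boost :: "real \<Rightarrow> real \<times> real \<Rightarrow> real \<times> real" where
  "boost \<Psi> p = (cosh \<Psi> * fst p + sinh \<Psi> * snd p, sinh \<Psi> * fst p + cosh \<Psi> * snd p)"

definition I_plus :: "real \<times> real \<Rightarrow> bool" where
  "I_plus p \<longleftrightarrow> fst p > \<bar>snd p\<bar>"

definition I_minus :: "real \<times> real \<Rightarrow> bool" where
  "I_minus p \<longleftrightarrow> - fst p > \<bar>snd p\<bar>"

text \<open>Future unit normal (time orientation by d/dt, preserved by boosts and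
  spatial translations) to a tangent vector v.\<close>

definition future_unit_normal :: "real \<times> real \<Rightarrow> real \<times> real \<Rightarrow> bool" where
  "future_unit_normal v \<nu> \<longleftrightarrow> mink \<nu> v = 0 \<and> mink \<nu> \<nu> = -1 \<and> fst \<nu> > 0"

definition fnormal :: "real \<times> real \<Rightarrow> real \<times> real" where
  "fnormal v = (THE \<nu>. future_unit_normal v \<nu>)"

definition dcurve :: "(real \<Rightarrow> real \<times> real) \<Rightarrow> real \<Rightarrow> real \<times> real" where
  "dcurve \<gamma> s = vector_derivative \<gamma> (at s)"

definition ddcurve :: "(real \<Rightarrow> real \<times> real) \<Rightarrow> real \<Rightarrow> real \<times> real" where
  "ddcurve \<gamma> s = vector_derivative (dcurve \<gamma>) (at s)"

definition smooth_curve :: "(real \<Rightarrow> real \<times> real) \<Rightarrow> bool" where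
  "smooth_curve \<gamma> \<longleftrightarrow> smooth_real (\<lambda>s. fst (\<gamma> s)) \<and> smooth_real (\<lambda>s. snd (\<gamma> s))"

text \<open>A simple product embedding iota(s) = (gamma(s^1), (s^2,...,s^n)) of T^n into
  (2-dim flat factor) x T^{n-1}_{lhat}.  The curve gamma : R/Z -> factor is given by a
  lift gamma : R -> R^{1,1}.  Components of the induced metric and of the second
  fundamental form K(X,Y) = - <n, nabla_X Y> (n future unit normal) of iota in the
  coordinates s^1..s^n of T^n (lhat is indexed by 2..n).\<close>

definition sp_induced_metric ::
  "nat \<Rightarrow> (nat \<Rightarrow> real) \<Rightarrow> (real \<Rightarrow> real \<times> real) \<Rightarrow> nat \<Rightarrow> nat \<Rightarrow> (nat \<Rightarrow> real) \<Rightarrow> real" where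
  "sp_induced_metric n lhat \<gamma> i j s =
     (if i = 1 \<and> j = 1 then mink (dcurve \<gamma> (s 1)) (dcurve \<gamma> (s 1))
      else if i = j \<and> i \<in> {2..n} then (lhat i)^2 else 0)"

definition sp_sff ::
  "nat \<Rightarrow> (real \<Rightarrow> real \<times> real) \<Rightarrow> nat \<Rightarrow> nat \<Rightarrow> (nat \<Rightarrow> real) \<Rightarrow> real" where
  "sp_sff n \<gamma> i j s =
     (if i = 1 \<and> j = 1 then - mink (fnormal (dcurve \<gamma> (s 1))) (ddcurve \<gamma> (s 1)) else 0)"

text \<open>gamma (lift) descends to a smooth embedding R/Z -> K_Psi = I_(+/-) / <B_Psi>.\<close>

definition kasner_curve :: "real \<Rightarrow> (real \<Rightarrow> real \<times> real) \<Rightarrow> bool" where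
  "kasner_curve \<Psi> \<gamma> \<longleftrightarrow>
     \<Psi> \<noteq> 0 \<and> smooth_curve \<gamma> \<and>
     (\<Psi> > 0 \<longrightarrow> (\<forall>s. I_plus (\<gamma> s))) \<and> (\<Psi> < 0 \<longrightarrow> (\<forall>s. I_minus (\<gamma> s))) \<and>
     (\<exists>m::int. \<forall>s. \<gamma> (s + 1) = boost (of_int m * \<Psi>) (\<gamma> s)) \<and>
     (\<forall>s\<in>{0..<1}. \<forall>s'\<in>{0..<1}. (\<exists>k::int. \<gamma> s = boost (of_int k * \<Psi>) (\<gamma> s')) \<longrightarrow> s = s') \<and>
     (\<forall>s. dcurve \<gamma> s \<noteq> 0)"

text \<open>gamma (lift) descends to a smooth embedding R/Z -> C_L = R^{1,1} / <x -> x + L>.\<close>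

definition cylinder_curve :: "real \<Rightarrow> (real \<Rightarrow> real \<times> real) \<Rightarrow> bool" where
  "cylinder_curve L \<gamma> \<longleftrightarrow>
     L > 0 \<and> smooth_curve \<gamma> \<and>
     (\<exists>m::int. \<forall>s. \<gamma> (s + 1) = \<gamma> s + (0, of_int m * L)) \<and>
     (\<forall>s\<in>{0..<1}. \<forall>s'\<in>{0..<1}. (\<exists>k::int. \<gamma> s = \<gamma> s' + (0, of_int k * L)) \<longrightarrow> s = s') \<and>
     (\<forall>s. dcurve \<gamma> s \<noteq> 0)"

definition sp_induces ::
  "nat \<Rightarrow> (nat \<Rightarrow> real) \<Rightarrow> (real \<Rightarrow> real \<times> real) \<Rightarrow>
   (nat \<Rightarrow> nat \<Rightarrow> (nat \<Rightarrow> real) \<Rightarrow> real) \<Rightarrow> (nat \<Rightarrow> nat \<Rightarrow> (nat \<Rightarrow> real) \<Rightarrow> real) \<Rightarrow> bool" where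
  "sp_induces n lhat \<gamma> g K \<longleftrightarrow>
     (\<forall>i j s. g i j s = sp_induced_metric n lhat \<gamma> i j s) \<and>
     (\<forall>i j s. K i j s = sp_sff n \<gamma> i j s)"

end

theory Submission
  imports Defs "HOL-Probability.Probability"
begin

text \<open>A curve in the Minkowski plane with constant speed \<open>a\<close> and hyperbolic angle \<open>\<phi>\<close>,
  i.e. with velocity \<open>a (sinh \<phi>, cosh \<phi>)\<close>, induces the metric \<open>a\<^sup>2 (ds\<^sup>1)\<^sup>2\<close> and the second
  fundamental form \<open>a \<phi>' (ds\<^sup>1)\<^sup>2\<close>, so \<open>\<phi>' = a \<tau>\<close> realises the given data.  Since \<open>\<tau>\<close> is
  1-periodic, \<open>\<phi> (s + 1) = \<phi> s + \<Psi>\<close> with \<open>\<Psi> = a \<integral>\<^sub>0\<^sup>1 \<tau>\<close>, which is \<open>r \<ell>\<^sub>1\<close> times the mean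
  value of \<open>\<tau>\<close>.  In the null coordinates \<open>u = t + x\<close>, \<open>w = t - x\<close> the curve satisfies
  \<open>u' = a exp \<phi>\<close>, \<open>w' = - a exp (- \<phi>)\<close>, so the shift \<open>s \<mapsto> s + 1\<close> multiplies \<open>u'\<close> by
  \<open>exp \<Psi>\<close> and \<open>w'\<close> by \<open>exp (- \<Psi>)\<close>.  If \<open>\<Psi> \<noteq> 0\<close>, suitable integration constants for \<open>u\<close>
  and \<open>w\<close> turn this shift into the boost \<open>B\<^sub>\<Psi>\<close>, and the monotonicity of \<open>u\<close> and \<open>w\<close> keeps
  the curve in the light cone \<open>I\<^sub>+\<close> or \<open>I\<^sub>-\<close>; it thus descends to the Kasner quotient.
  If \<open>\<Psi> = 0\<close>, adding a suitable constant to \<open>\<phi>\<close> turns the shift into a spatial translation,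
  and the curve descends to a cylinder \<open>\<real>\<^sup>1\<^sup>,\<^sup>1 / \<langle>x \<mapsto> x + L\<rangle>\<close>.\<close>

section \<open>Smooth real functions\<close>

definition differentiable_upto :: "nat \<Rightarrow> (real \<Rightarrow> real) \<Rightarrow> bool" where
  "differentiable_upto k f \<longleftrightarrow> (\<forall>j\<le>k. \<forall>x. ((deriv ^^ j) f) differentiable (at x))"

lemma smooth_real_iff_differentiable_upto: "smooth_real f \<longleftrightarrow> (\<forall>k. differentiable_upto k f)"
  unfolding smooth_real_def differentiable_upto_def by auto

lemma differentiable_upto_0: "differentiable_upto 0 f \<longleftrightarrow> (\<forall>x. f differentiable (at x))"
  by (simp add: differentiable_upto_def)

lemma differentiable_upto_Suc:
  "differentiable_upto (Suc k) f \<longleftrightarrow>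
     (\<forall>x. f differentiable (at x)) \<and> differentiable_upto k (deriv f)"
proof -
  have "(deriv ^^ Suc j) f = (deriv ^^ j) (deriv f)" for j
    by (simp add: funpow_Suc_right del: funpow.simps)
  then show ?thesis
    unfolding differentiable_upto_def
    by (metis (no_types, lifting) Suc_le_mono funpow_0 le0 not0_implies_Suc)
qed

lemma differentiable_upto_SucD: "differentiable_upto (Suc k) f \<Longrightarrow> differentiable_upto k f"
  by (simp add: differentiable_upto_def)

lemma differentiable_upto_SucI:
  assumes "\<And>x. (F has_real_derivative f x) (at x)" and "differentiable_upto k f"
  shows "differentiable_upto (Suc k) F"
proof -
  have "deriv F = f"
    using assms(1) by (auto intro: DERIV_imp_deriv)
  with assms show ?thesis
    by (auto simp: differentiable_upto_Suc real_differentiable_def)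
qed

lemma differentiable_upto_has_derivative:
  assumes "differentiable_upto (Suc k) f"
  shows "(f has_real_derivative deriv f x) (at x)"
  using assms by (simp add: differentiable_upto_Suc DERIV_deriv_iff_real_differentiable)

lemma differentiable_upto_const: "differentiable_upto k (\<lambda>x. c)"
proof (induction k arbitrary: c)
  case (Suc k)
  then show ?case
    by (intro differentiable_upto_SucI[of _ "\<lambda>x. 0"]) (auto intro: derivative_intros)
qed (simp add: differentiable_upto_0)

lemma differentiable_upto_add:
  "differentiable_upto k f \<Longrightarrow> differentiable_upto k g \<Longrightarrow> differentiable_upto k (\<lambda>x. f x + g x)"
proof (induction k arbitrary: f g)
  case (Suc k)
  show ?case
  proof (rule differentiable_upto_SucI)
    show "((\<lambda>x. f x + g x) has_real_derivative deriv f x + deriv g x) (at x)" for x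
      using Suc.prems by (intro derivative_intros differentiable_upto_has_derivative)
    show "differentiable_upto k (\<lambda>x. deriv f x + deriv g x)"
      using Suc by (simp add: differentiable_upto_Suc)
  qed
qed (auto simp: differentiable_upto_0)

lemma differentiable_upto_mult:
  "differentiable_upto k f \<Longrightarrow> differentiable_upto k g \<Longrightarrow> differentiable_upto k (\<lambda>x. f x * g x)"
proof (induction k arbitrary: f g)
  case (Suc k)
  show ?case
  proof (rule differentiable_upto_SucI)
    show "((\<lambda>x. f x * g x) has_real_derivative deriv f x * g x + f x * deriv g x) (at x)" for x
      using Suc.prems
      by (auto intro!: derivative_eq_intros differentiable_upto_has_derivative)
    show "differentiable_upto k (\<lambda>x. deriv f x * g x + f x * deriv g x)"
      using Suc by (intro differentiable_upto_add Suc.IH)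
        (auto simp: differentiable_upto_Suc intro: differentiable_upto_SucD)
  qed
qed (auto simp: differentiable_upto_0)

lemma differentiable_upto_exp:
  "differentiable_upto k f \<Longrightarrow> differentiable_upto k (\<lambda>x. exp (f x))"
proof (induction k arbitrary: f)
  case 0
  then show ?case
    unfolding differentiable_upto_0 real_differentiable_def
    by (blast intro: DERIV_chain2[OF DERIV_exp])
next
  case (Suc k)
  show ?case
  proof (rule differentiable_upto_SucI)
    show "((\<lambda>x. exp (f x)) has_real_derivative exp (f x) * deriv f x) (at x)" for x
      using Suc.prems by (auto intro!: derivative_eq_intros differentiable_upto_has_derivative)
    show "differentiable_upto k (\<lambda>x. exp (f x) * deriv f x)"
      using Suc by (intro differentiable_upto_mult Suc.IH)
        (auto simp: differentiable_upto_Suc intro: differentiable_upto_SucD)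
  qed
qed

lemma smooth_real_const: "smooth_real (\<lambda>x. c)"
  by (simp add: smooth_real_iff_differentiable_upto differentiable_upto_const)

lemma smooth_real_add: "smooth_real f \<Longrightarrow> smooth_real g \<Longrightarrow> smooth_real (\<lambda>x. f x + g x)"
  by (simp add: smooth_real_iff_differentiable_upto differentiable_upto_add)

lemma smooth_real_mult: "smooth_real f \<Longrightarrow> smooth_real g \<Longrightarrow> smooth_real (\<lambda>x. f x * g x)"
  by (simp add: smooth_real_iff_differentiable_upto differentiable_upto_mult)

lemma smooth_real_exp: "smooth_real f \<Longrightarrow> smooth_real (\<lambda>x. exp (f x))"
  by (simp add: smooth_real_iff_differentiable_upto differentiable_upto_exp)

lemma smooth_real_antiderivative:
  assumes "\<And>x. (F has_real_derivative f x) (at x)" and "smooth_real f"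
  shows "smooth_real F"
  using assms differentiable_upto_SucI differentiable_upto_SucD
  unfolding smooth_real_iff_differentiable_upto by blast

lemma smooth_real_continuous_on: "smooth_real f \<Longrightarrow> continuous_on A f"
  unfolding smooth_real_def
  by (intro continuous_at_imp_continuous_on ballI)
     (metis differentiable_imp_continuous_within funpow_0)

lemma smooth_real_has_antiderivative:
  assumes "smooth_real f"
  obtains F where "\<And>x. (F has_real_derivative f x) (at x)"
proof -
  have "\<exists>F. \<forall>x::real. (-\<infinity>::ereal) < x \<longrightarrow> x < \<infinity> \<longrightarrow> (F has_vector_derivative f x) (at x)"
    using smooth_real_continuous_on[OF assms, of UNIV]
    by (intro einterval_antiderivative) (auto simp: continuous_on_eq_continuous_at)
  with that show ?thesis
    by (auto simp: has_real_derivative_iff_has_vector_derivative)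
qed

section \<open>Curves in the Minkowski plane with prescribed curvature\<close>

lemma fnormal_hyperbolic:
  assumes "a > 0"
  shows "fnormal (a * sinh p, a * cosh p) = (cosh p, sinh p)"
  unfolding fnormal_def
proof (rule the_equality)
  show "future_unit_normal (a * sinh p, a * cosh p) (cosh p, sinh p)"
    unfolding future_unit_normal_def mink_def
    using cosh_square_eq[of p] by (auto simp: power2_eq_square algebra_simps)
next
  fix \<nu> assume \<nu>: "future_unit_normal (a * sinh p, a * cosh p) \<nu>"
  obtain x y where \<nu>_eq: "\<nu> = (x, y)" by fastforce
  have orth: "y * cosh p = x * sinh p" and unit: "y\<^sup>2 = x\<^sup>2 - 1" and future: "x > 0"
    using \<nu> assms by (auto simp: future_unit_normal_def mink_def \<nu>_eq algebra_simps power2_eq_square)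
  have "x\<^sup>2 * (cosh p)\<^sup>2 = (x * sinh p)\<^sup>2 + x\<^sup>2"
    by (simp add: cosh_square_eq power_mult_distrib algebra_simps)
  also have "\<dots> = y\<^sup>2 * (cosh p)\<^sup>2 + x\<^sup>2"
    by (simp flip: orth add: power_mult_distrib)
  finally have "x\<^sup>2 = (cosh p)\<^sup>2"
    using unit by (simp add: algebra_simps)
  then have "x = cosh p"
    using future cosh_real_pos[of p] by (simp add: power2_eq_iff_nonneg)
  with orth cosh_real_pos[of p] show "\<nu> = (cosh p, sinh p)"
    by (simp add: \<nu>_eq)
qed

lemma boost_null_coordinates:
  "boost \<Psi> ((U + W) / 2, (U - W) / 2) =
     ((exp \<Psi> * U + exp (- \<Psi>) * W) / 2, (exp \<Psi> * U - exp (- \<Psi>) * W) / 2)"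
  unfolding boost_def cosh_plus_sinh[symmetric] cosh_minus_sinh[symmetric]
  by (simp add: algebra_simps add_divide_distrib diff_divide_distrib)

lemma eq_plus_of_int_in_unit_interval:
  fixes s s' :: real
  assumes "s \<in> {0..<1}" "s' \<in> {0..<1}" "s = s' + of_int k"
  shows "s = s'"
proof -
  have "k < 1" "k > -1"
    using assms by (auto simp flip: of_int_less_iff)
  with assms show ?thesis by simp
qed

locale null_curve =
  fixes a :: real and \<tau> \<phi> u w :: "real \<Rightarrow> real"
  assumes a_pos: "a > 0"
    and smooth_\<tau>: "smooth_real \<tau>"
    and \<phi>_deriv: "\<And>s. (\<phi> has_real_derivative a * \<tau> s) (at s)"
    and u_deriv: "\<And>s. (u has_real_derivative a * exp (\<phi> s)) (at s)"
    and w_deriv: "\<And>s. (w has_real_derivative - (a * exp (- \<phi> s))) (at s)"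
begin

definition curve :: "real \<Rightarrow> real \<times> real" where
  "curve s = ((u s + w s) / 2, (u s - w s) / 2)"

lemma curve_vector_derivative:
  "(curve has_vector_derivative (a * sinh (\<phi> s), a * cosh (\<phi> s))) (at s)"
proof -
  have "((\<lambda>s. (u s + w s) / 2) has_real_derivative a * sinh (\<phi> s)) (at s)"
    "((\<lambda>s. (u s - w s) / 2) has_real_derivative a * cosh (\<phi> s)) (at s)"
    by (rule derivative_eq_intros u_deriv w_deriv refl |
        simp add: sinh_def cosh_def field_simps)+
  then show ?thesis
    unfolding curve_def[abs_def]
    by (intro has_vector_derivative_Pair) (simp_all add: has_real_derivative_iff_has_vector_derivative)
qed

lemma dcurve_curve: "dcurve curve s = (a * sinh (\<phi> s), a * cosh (\<phi> s))"
  unfolding dcurve_def using curve_vector_derivative by (rule vector_derivative_at)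

lemma ddcurve_curve: "ddcurve curve s = (a * a * \<tau> s * cosh (\<phi> s), a * a * \<tau> s * sinh (\<phi> s))"
proof -
  have "((\<lambda>s. a * sinh (\<phi> s)) has_real_derivative a * a * \<tau> s * cosh (\<phi> s)) (at s)"
    "((\<lambda>s. a * cosh (\<phi> s)) has_real_derivative a * a * \<tau> s * sinh (\<phi> s)) (at s)"
    by (rule derivative_eq_intros \<phi>_deriv refl | simp)+
  then have "(dcurve curve has_vector_derivative
      (a * a * \<tau> s * cosh (\<phi> s), a * a * \<tau> s * sinh (\<phi> s))) (at s)"
    unfolding dcurve_curve[abs_def]
    by (intro has_vector_derivative_Pair) (simp_all add: has_real_derivative_iff_has_vector_derivative)
  then show ?thesis
    unfolding ddcurve_def by (rule vector_derivative_at)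
qed

lemma induced_metric_curve: "mink (dcurve curve s) (dcurve curve s) = a\<^sup>2"
  using cosh_square_eq[of "\<phi> s"]
  by (simp add: dcurve_curve mink_def power2_eq_square algebra_simps)

lemma second_fundamental_form_curve:
  "- mink (fnormal (dcurve curve s)) (ddcurve curve s) = \<tau> s * a\<^sup>2"
proof -
  have "- mink (fnormal (dcurve curve s)) (ddcurve curve s)
      = a * a * \<tau> s * ((cosh (\<phi> s))\<^sup>2 - (sinh (\<phi> s))\<^sup>2)"
    by (simp add: dcurve_curve ddcurve_curve fnormal_hyperbolic a_pos mink_def
        power2_eq_square algebra_simps)
  moreover have "(cosh (\<phi> s))\<^sup>2 - (sinh (\<phi> s))\<^sup>2 = 1"
    by (simp add: cosh_square_eq)
  ultimately show ?thesis
    by (simp add: power2_eq_square)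
qed

lemma dcurve_nonzero: "dcurve curve s \<noteq> 0"
  using a_pos cosh_real_pos[of "\<phi> s"] by (simp add: dcurve_curve zero_prod_def)

lemma smooth_curve: "smooth_curve curve"
proof -
  have smooth_\<phi>: "smooth_real \<phi>"
    by (rule smooth_real_antiderivative[OF \<phi>_deriv]) (intro smooth_real_mult smooth_real_const smooth_\<tau>)
  then have "smooth_real (\<lambda>s. a * exp (\<phi> s))" "smooth_real (\<lambda>s. (- a) * exp ((- 1) * \<phi> s))"
    by (intro smooth_real_mult smooth_real_const smooth_real_exp smooth_\<phi>)+
  then have smooth_uw: "smooth_real u" "smooth_real w"
    by (auto intro: smooth_real_antiderivative u_deriv w_deriv)
  have "smooth_real (\<lambda>s. (u s + w s) * (1 / 2))" "smooth_real (\<lambda>s. (u s + (-1) * w s) * (1 / 2))"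
    by (intro smooth_real_mult smooth_real_add smooth_real_const smooth_uw)+
  then show ?thesis
    unfolding smooth_curve_def curve_def by (simp add: field_simps)
qed

lemma strict_mono_u: "strict_mono u"
proof (rule strict_monoI)
  fix x y :: real assume "x < y"
  then show "u x < u y"
  proof (rule DERIV_pos_imp_increasing)
    fix s show "\<exists>D. (u has_real_derivative D) (at s) \<and> D > 0"
      using u_deriv a_pos by (intro exI[of _ "a * exp (\<phi> s)"]) simp
  qed
qed

lemma strict_antimono_w:
  assumes "x < y" shows "w y < w x"
  using assms
proof (rule DERIV_neg_imp_decreasing)
  fix s show "\<exists>D. (w has_real_derivative D) (at s) \<and> D < 0"
    using w_deriv a_pos by (intro exI[of _ "- (a * exp (- \<phi> s))"]) simp
qed

lemma inj_curve: "inj curve"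
proof (rule injI)
  fix x y assume "curve x = curve y"
  then have "u x = u y"
    unfolding curve_def by (simp add: field_simps)
  then show "x = y"
    using strict_mono_u by (simp add: strict_mono_eq)
qed

lemma mono_u: "x \<le> y \<Longrightarrow> u x \<le> u y"
  using strict_mono_u by (simp add: strict_mono_less_eq)

lemma antimono_w: "x \<le> y \<Longrightarrow> w y \<le> w x"
  using strict_antimono_w[of x y] by (cases "x = y") auto

lemma curve_in_unit_interval_eq:
  assumes "s \<in> {0..<1}" "s' \<in> {0..<1}" "curve s = curve (s' + of_int k)"
  shows "s = s'"
  using assms inj_curve eq_plus_of_int_in_unit_interval by (metis injD)

lemma sp_induces_curve:
  assumes "l 1 = a" "n \<ge> 1"
  shows "sp_induces n l curve (\<lambda>i j s. torus_metric n l i j)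
           (\<lambda>i j s. if i = 1 \<and> j = 1 then \<tau> (s 1) * (l 1)\<^sup>2 else 0)"
  unfolding sp_induces_def sp_induced_metric_def sp_sff_def torus_metric_def
  using induced_metric_curve second_fundamental_form_curve assms
  by (auto simp: not_less_eq_eq)

end

section \<open>Periodic curvature: Kasner and cylinder quotients\<close>

lemma null_curve_translate:
  assumes "null_curve a \<tau> \<phi> u w"
  shows "null_curve a \<tau> \<phi> (\<lambda>s. u s + c) (\<lambda>s. w s + d)"
proof -
  interpret null_curve a \<tau> \<phi> u w by fact
  show ?thesis
    by unfold_locales (auto intro!: derivative_eq_intros u_deriv w_deriv a_pos smooth_\<tau> \<phi>_deriv)
qed

lemma null_curve_rescale:
  assumes "null_curve a \<tau> \<phi> u w"
  shows "null_curve a \<tau> (\<lambda>s. \<phi> s + c) (\<lambda>s. exp c * u s) (\<lambda>s. exp (- c) * w s)"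
proof -
  interpret null_curve a \<tau> \<phi> u w by fact
  show ?thesis
    by unfold_locales
       (auto intro!: derivative_eq_intros u_deriv w_deriv a_pos smooth_\<tau> \<phi>_deriv
         simp: exp_add exp_diff exp_minus field_simps)
qed

lemma null_curve_exists:
  assumes "a > 0" and "smooth_real \<tau>"
  shows "\<exists>\<phi> u w. null_curve a \<tau> \<phi> u w"
proof -
  obtain T where T: "\<And>s. (T has_real_derivative \<tau> s) (at s)"
    using smooth_real_has_antiderivative[OF assms(2)] by blast
  define \<phi> where "\<phi> s = a * T s" for s
  have \<phi>_deriv: "(\<phi> has_real_derivative a * \<tau> s) (at s)" for s
    unfolding \<phi>_def[abs_def] by (rule DERIV_cmult[OF T])
  have smooth_\<phi>: "smooth_real \<phi>"
    by (rule smooth_real_antiderivative[OF \<phi>_deriv]) (intro smooth_real_mult smooth_real_const assms(2))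
  have "smooth_real (\<lambda>s. a * exp (\<phi> s))" "smooth_real (\<lambda>s. (- a) * exp ((- 1) * \<phi> s))"
    by (intro smooth_real_mult smooth_real_const smooth_real_exp smooth_\<phi>)+
  then obtain u w where "\<And>s. (u has_real_derivative a * exp (\<phi> s)) (at s)"
    "\<And>s. (w has_real_derivative (- a) * exp ((- 1) * \<phi> s)) (at s)"
    by (metis smooth_real_has_antiderivative)
  then have "null_curve a \<tau> \<phi> u w"
    using assms \<phi>_deriv by unfold_locales simp_all
  then show ?thesis by blast
qed

lemma shift_eq_of_derivative_shift:
  fixes f f' :: "real \<Rightarrow> real"
  assumes f: "\<And>x. (f has_real_derivative f' x) (at x)" and f'_shift: "\<And>x. f' (x + 1) = k * f' x"
  shows "f (s + 1) = k * f s + (f 1 - k * f 0)"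
proof -
  have "((\<lambda>s. f (s + 1) - k * f s) has_real_derivative 0) (at x)" for x
  proof -
    have "((\<lambda>s. f (s + 1)) has_real_derivative f' (x + 1)) (at x)"
      using f[of "x + 1"] by (simp add: DERIV_shift)
    then have "((\<lambda>s. f (s + 1) - k * f s) has_real_derivative f' (x + 1) - k * f' x) (at x)"
      by (intro DERIV_diff DERIV_cmult f)
    then show ?thesis by (simp add: f'_shift)
  qed
  from DERIV_isconst_all[OF allI[OF this], of s 0] show ?thesis
    by simp
qed

lemma shift_of_int_mult:
  fixes f :: "real \<Rightarrow> real"
  assumes shift: "\<And>s. f (s + 1) = exp p * f s"
  shows "f (s + of_int k) = exp (of_int k * p) * f s"
proof (induction k rule: int_induct[where k = 0])
  case (step1 i)
  have "f (s + of_int (i + 1)) = exp p * f (s + of_int i)"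
    using shift[of "s + of_int i"] by (simp add: add.assoc)
  with step1 show ?case by (simp add: algebra_simps exp_add)
next
  case (step2 i)
  have "f (s + of_int i) = exp p * f (s + of_int (i - 1))"
    using shift[of "s + of_int (i - 1)"] by (simp add: algebra_simps)
  with step2 show ?case by (simp add: algebra_simps exp_diff field_simps)
qed simp

lemma shift_of_int_add:
  fixes f :: "real \<Rightarrow> real"
  assumes shift: "\<And>s. f (s + 1) = f s + d"
  shows "f (s + of_int k) = f s + of_int k * d"
proof (induction k rule: int_induct[where k = 0])
  case (step1 i)
  have "f (s + of_int (i + 1)) = f (s + of_int i) + d"
    using shift[of "s + of_int i"] by (simp add: add.assoc)
  with step1 show ?case by (simp add: algebra_simps)
next
  case (step2 i)
  have "f (s + of_int i) = f (s + of_int (i - 1)) + d"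
    using shift[of "s + of_int (i - 1)"] by (simp add: algebra_simps)
  with step2 show ?case by (simp add: algebra_simps)
qed simp

lemma I_plus_null_coordinates: "I_plus ((U + W) / 2, (U - W) / 2) \<longleftrightarrow> U > 0 \<and> W > 0"
  by (auto simp: I_plus_def abs_less_iff field_simps)

lemma I_minus_null_coordinates: "I_minus ((U + W) / 2, (U - W) / 2) \<longleftrightarrow> U < 0 \<and> W < 0"
  by (auto simp: I_minus_def abs_less_iff field_simps)

locale periodic_null_curve = null_curve +
  assumes \<tau>_periodic: "\<And>s. \<tau> (s + 1) = \<tau> s"
begin

definition \<Psi> :: real where "\<Psi> = \<phi> 1 - \<phi> 0"

lemma \<Psi>_eq_integral: "\<Psi> = a * integral {0..1} \<tau>"
proof -
  have "((\<lambda>s. a * \<tau> s) has_integral \<phi> 1 - \<phi> 0) {0..1}"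
    by (intro fundamental_theorem_of_calculus) (auto intro: \<phi>_deriv DERIV_subset
        simp: has_real_derivative_iff_has_vector_derivative[symmetric])
  then have "integral {0..1} (\<lambda>s. a * \<tau> s) = \<phi> 1 - \<phi> 0"
    by (rule integral_unique)
  moreover have "\<tau> integrable_on {0..1}"
    using smooth_real_continuous_on[OF smooth_\<tau>] by (rule integrable_continuous_real)
  then have "a * integral {0..1} \<tau> = integral {0..1} (\<lambda>s. a * \<tau> s)"
    by (rule integral_mult)
  ultimately show ?thesis
    unfolding \<Psi>_def by linarith
qed

lemma \<phi>_shift: "\<phi> (s + 1) = \<phi> s + \<Psi>"
  using shift_eq_of_derivative_shift[of \<phi> "\<lambda>s. a * \<tau> s" 1] \<phi>_deriv \<tau>_periodic
  by (simp add: \<Psi>_def)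

lemma u_shift: "u (s + 1) = exp \<Psi> * u s + (u 1 - exp \<Psi> * u 0)"
  by (rule shift_eq_of_derivative_shift[OF u_deriv]) (simp add: \<phi>_shift exp_add)

lemma w_shift: "w (s + 1) = exp (- \<Psi>) * w s + (w 1 - exp (- \<Psi>) * w 0)"
proof (rule shift_eq_of_derivative_shift[OF w_deriv])
  fix x
  have "exp (- \<phi> (x + 1)) = exp (- \<Psi>) * exp (- \<phi> x)"
    unfolding \<phi>_shift mult_exp_exp by (simp add: algebra_simps)
  then show "- (a * exp (- \<phi> (x + 1))) = exp (- \<Psi>) * - (a * exp (- \<phi> x))"
    by simp
qed

lemma kasner_curve_curve:
  assumes \<Psi>_nonzero: "\<Psi> \<noteq> 0" and u1: "u 1 = exp \<Psi> * u 0" and w1: "w 1 = exp (- \<Psi>) * w 0"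
  shows "kasner_curve \<Psi> curve"
proof -
  have u_iter: "u (s + of_int k) = exp (of_int k * \<Psi>) * u s" for s k
    by (rule shift_of_int_mult) (simp add: u_shift u1)
  have w_iter: "w (s + of_int k) = exp (of_int k * (- \<Psi>)) * w s" for s k
    by (rule shift_of_int_mult) (simp add: w_shift w1)
  have boost_iter: "curve (s + of_int k) = boost (of_int k * \<Psi>) (curve s)" for s k
    unfolding curve_def boost_null_coordinates u_iter w_iter by simp
  have "u 0 * (exp \<Psi> - 1) > 0" "w 0 * (exp (- \<Psi>) - 1) < 0"
    using u1 w1 strict_mono_u strict_antimono_w[of 0 1]
    by (auto simp: algebra_simps dest: strict_monoD[of u 0 1])
  then have signs: "\<Psi> > 0 \<Longrightarrow> u 0 > 0 \<and> w 0 > 0" "\<Psi> < 0 \<Longrightarrow> u 0 < 0 \<and> w 0 < 0"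
    by (auto simp: zero_less_mult_iff mult_less_0_iff)
  have "I_plus (curve s)" if "\<Psi> > 0" for s
  proof -
    have "0 < u (0 + of_int \<lfloor>s\<rfloor>)" "0 < w (0 + of_int \<lceil>s\<rceil>)"
      unfolding u_iter w_iter using signs(1)[OF that] by simp_all
    then show ?thesis
      unfolding curve_def I_plus_null_coordinates
      using mono_u[of "of_int \<lfloor>s\<rfloor>" s] antimono_w[of s "of_int \<lceil>s\<rceil>"] by simp
  qed
  moreover have "I_minus (curve s)" if "\<Psi> < 0" for s
  proof -
    have "u (0 + of_int \<lceil>s\<rceil>) < 0" "w (0 + of_int \<lfloor>s\<rfloor>) < 0"
      unfolding u_iter w_iter using signs(2)[OF that] by (simp_all add: mult_pos_neg)
    then show ?thesis
      unfolding curve_def I_minus_null_coordinates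
      using mono_u[of s "of_int \<lceil>s\<rceil>"] antimono_w[of "of_int \<lfloor>s\<rfloor>" s] by simp
  qed
  moreover have "\<forall>s. curve (s + 1) = boost (of_int 1 * \<Psi>) (curve s)"
    using boost_iter[of _ 1] by simp
  ultimately show ?thesis
    unfolding kasner_curve_def
    using \<Psi>_nonzero smooth_curve dcurve_nonzero curve_in_unit_interval_eq boost_iter by metis
qed

lemma cylinder_curve_curve:
  assumes \<Psi>_zero: "\<Psi> = 0" and balanced: "u 1 - u 0 = w 0 - w 1"
  shows "cylinder_curve (u 1 - u 0) curve"
proof -
  have "u (s + 1) = u s + (u 1 - u 0)" "w (s + 1) = w s + - (u 1 - u 0)" for s
    using u_shift w_shift balanced by (simp_all add: \<Psi>_zero)
  then have translate_iter: "curve (s + of_int k) = curve s + (0, of_int k * (u 1 - u 0))" for s k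
  proof -
    have "u (s + of_int k) = u s + of_int k * (u 1 - u 0)" "w (s + of_int k) = w s + of_int k * - (u 1 - u 0)"
      by (rule shift_of_int_add, fact)+
    then show ?thesis
      unfolding curve_def by (simp add: field_simps)
  qed
  have "u 1 - u 0 > 0"
    using strict_mono_u by (simp add: strict_mono_def)
  moreover have "\<forall>s. curve (s + 1) = curve s + (0, of_int 1 * (u 1 - u 0))"
    using translate_iter[of _ 1] by simp
  ultimately show ?thesis
    unfolding cylinder_curve_def
    using smooth_curve dcurve_nonzero curve_in_unit_interval_eq translate_iter by metis
qed

end

lemma exists_kasner_embedding:
  assumes "a > 0" and "smooth_real \<tau>" and "\<And>s. \<tau> (s + 1) = \<tau> s"
    and "a * integral {0..1} \<tau> \<noteq> 0" and "n \<ge> 1" and "l 1 = a"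
  shows "\<exists>\<gamma>. kasner_curve (a * integral {0..1} \<tau>) \<gamma> \<and>
           sp_induces n l \<gamma> (\<lambda>i j s. torus_metric n l i j)
             (\<lambda>i j s. if i = 1 \<and> j = 1 then \<tau> (s 1) * (l 1)\<^sup>2 else 0)"
proof -
  obtain \<phi> u w where uw: "null_curve a \<tau> \<phi> u w"
    using null_curve_exists assms(1,2) by blast
  define \<Psi> where "\<Psi> = a * integral {0..1} \<tau>"
  txt \<open>\<open>- cu\<close> and \<open>- cw\<close> are the fixed points of the affine maps by which the shift
    \<open>s \<mapsto> s + 1\<close> acts on \<open>u\<close> and \<open>w\<close>.\<close>
  define cu where "cu = (u 1 - exp \<Psi> * u 0) / (exp \<Psi> - 1)"
  define cw where "cw = (w 1 - exp (- \<Psi>) * w 0) / (exp (- \<Psi>) - 1)"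
  interpret K: periodic_null_curve a \<tau> \<phi> "\<lambda>s. u s + cu" "\<lambda>s. w s + cw"
    using null_curve_translate[OF uw] assms(3)
    by (simp add: periodic_null_curve_def periodic_null_curve_axioms_def)
  have "exp \<Psi> - 1 \<noteq> 0" "exp (- \<Psi>) - 1 \<noteq> 0"
    using assms(4) by (auto simp: \<Psi>_def)
  then have "u 1 + cu = exp \<Psi> * (u 0 + cu)" "w 1 + cw = exp (- \<Psi>) * (w 0 + cw)"
    by (simp_all add: cu_def cw_def field_simps)
  then have "kasner_curve \<Psi> K.curve"
    using assms(4) by (intro K.kasner_curve_curve[unfolded K.\<Psi>_eq_integral \<Psi>_def[symmetric]])
      (simp_all add: \<Psi>_def)
  with K.sp_induces_curve assms(5,6) show ?thesis
    unfolding \<Psi>_def by blast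
qed

lemma exists_cylinder_embedding:
  assumes "a > 0" and "smooth_real \<tau>" and "\<And>s. \<tau> (s + 1) = \<tau> s"
    and "integral {0..1} \<tau> = 0" and "n \<ge> 1" and "l 1 = a"
  shows "\<exists>L \<gamma>. L > 0 \<and> cylinder_curve L \<gamma> \<and>
           sp_induces n l \<gamma> (\<lambda>i j s. torus_metric n l i j)
             (\<lambda>i j s. if i = 1 \<and> j = 1 then \<tau> (s 1) * (l 1)\<^sup>2 else 0)"
proof -
  obtain \<phi> u w where uw: "null_curve a \<tau> \<phi> u w"
    using null_curve_exists assms(1,2) by blast
  have "u 1 - u 0 > 0" "w 0 - w 1 > 0"
    using null_curve.strict_mono_u[OF uw] null_curve.strict_antimono_w[OF uw, of 0 1]
    by (simp_all add: strict_mono_def)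
  txt \<open>Rescaling \<open>u\<close> by \<open>exp c\<close> and \<open>w\<close> by \<open>exp (- c)\<close> makes the increments of \<open>u\<close> and
    \<open>- w\<close> over a period equal, so the shift by one period does not move the time coordinate.\<close>
  define c where "c = ln ((w 0 - w 1) / (u 1 - u 0)) / 2"
  have "exp c * exp c = (w 0 - w 1) / (u 1 - u 0)"
    using \<open>u 1 - u 0 > 0\<close> \<open>w 0 - w 1 > 0\<close> by (simp add: c_def flip: exp_add)
  then have balanced: "exp c * u 1 - exp c * u 0 = exp (- c) * w 0 - exp (- c) * w 1"
    using \<open>u 1 - u 0 > 0\<close> by (simp add: exp_minus field_simps)
  interpret K: periodic_null_curve a \<tau> "\<lambda>s. \<phi> s + c" "\<lambda>s. exp c * u s" "\<lambda>s. exp (- c) * w s"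
    using null_curve_rescale[OF uw] assms(3)
    by (simp add: periodic_null_curve_def periodic_null_curve_axioms_def)
  have "cylinder_curve (exp c * u 1 - exp c * u 0) K.curve"
    using assms(4) balanced by (intro K.cylinder_curve_curve) (simp_all add: K.\<Psi>_eq_integral)
  with K.sp_induces_curve assms(5,6) show ?thesis
    unfolding cylinder_curve_def by blast
qed

section \<open>Integrals over the torus\<close>

lemma integral_restrict_space_lborel_unit_interval:
  fixes g :: "real \<Rightarrow> real"
  assumes "continuous_on {0..1} g"
  shows "integral\<^sup>L (restrict_space lborel {0..1}) g = integral {0..1} g"
proof -
  have "integral\<^sup>L (restrict_space lborel {0..1}) g = (LINT x : {0..1} | lborel. g x)"
    unfolding set_lebesgue_integral_def by (rule integral_restrict_space) simp
  also have "\<dots> = integral {0..1} g"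
    by (rule set_borel_integral_eq_integral(2)[OF borel_integrable_atLeastAtMost'[OF assms]])
  finally show ?thesis .
qed

lemma torus_integral_first_coordinate:
  fixes g :: "real \<Rightarrow> real"
  assumes "n \<ge> 1" and "continuous_on {0..1} g"
  shows "torus_integral n l (\<lambda>s. g (s 1)) = (\<Prod>k\<in>{1..n}. l k) * integral {0..1} g"
proof -
  let ?M = "restrict_space lborel {0..1::real}"
  have "prob_space ?M"
    by (intro prob_spaceI) (simp add: space_restrict_space emeasure_restrict_space)
  then have "distr (PiM {1..n} (\<lambda>_. ?M)) ?M (\<lambda>s. s 1) = ?M"
    using assms(1) by (intro distr_PiM_component) auto
  then have "integral\<^sup>L ?M g = integral\<^sup>L (distr (PiM {1..n} (\<lambda>_. ?M)) ?M (\<lambda>s. s 1)) g"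
    by simp
  also have "\<dots> = integral\<^sup>L (PiM {1..n} (\<lambda>_. ?M)) (\<lambda>s. g (s 1))"
  proof (rule integral_distr)
    show "(\<lambda>s. s 1) \<in> PiM {1..n} (\<lambda>_. ?M) \<rightarrow>\<^sub>M ?M"
      using assms(1) by (intro measurable_component_singleton) simp
    show "g \<in> borel_measurable ?M"
      using borel_measurable_continuous_on_restrict[OF assms(2)]
      by (simp add: measurable_cong_sets[OF sets_restrict_space_cong[OF sets_lborel] refl])
  qed
  finally show ?thesis
    unfolding torus_integral_def integral_restrict_space_lborel_unit_interval[OF assms(2)] by simp
qed

theorem proposition7p2:
  fixes n :: nat and l :: "nat \<Rightarrow> real" and \<xi> N :: "real \<Rightarrow> real"
    and \<mu> \<tau>s c :: real
  assumes n3: "n \<ge> 3"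
    and lpos: "\<forall>k\<in>{1..n}. l k > 0"
    and xi_smooth: "smooth_real \<xi>" and xi_per: "\<forall>x. \<xi> (x + 1) = \<xi> x"
    and N_smooth: "smooth_real N" and N_per: "\<forall>x. N (x + 1) = N x"
    and N_pos: "\<forall>x. N x > 0"
    and int0: "torus_integral n l (\<lambda>s. \<xi> (s 1) * N (s 1)) = 0"
    and cases: "(\<mu> \<noteq> 0 \<and> \<tau>s \<noteq> 0 \<and> sgn \<mu> = sgn \<tau>s
                   \<and> c = (\<mu> / \<tau>s) powr (1 / (2 * real n / (real n - 2))))
              \<or> (\<mu> = 0 \<and> \<tau>s = 0 \<and> c > 0)"
  shows
    "let q = 2 * real n / (real n - 2);
         r = c powr ((q - 2) / 2);
         taubar = (\<lambda>x. \<tau>s + c powr (- 2 * q) * \<xi> x);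
         rl = (\<lambda>k. r * l k);
         gbar = (\<lambda>i j (s::nat \<Rightarrow> real). torus_metric n rl i j);
         Kbar = (\<lambda>i j (s::nat \<Rightarrow> real). if i = 1 \<and> j = 1 then taubar (s 1) * (rl 1)^2 else 0);
         tau0 = torus_integral n rl (\<lambda>s. taubar (s 1)) / torus_integral n rl (\<lambda>s. 1);
         lhat = rl
     in (tau0 \<noteq> 0 \<longrightarrow>
           (\<exists>\<gamma>. kasner_curve (rl 1 * tau0) \<gamma> \<and> sp_induces n lhat \<gamma> gbar Kbar))
      \<and> (tau0 = 0 \<longrightarrow>
           (\<exists>L \<gamma>. L > 0 \<and> cylinder_curve L \<gamma> \<and> sp_induces n lhat \<gamma> gbar Kbar))"
  \<comment> \<open>The hypotheses on \<open>N\<close> and \<open>\<integral> \<xi> N = 0\<close> only make \<open>(g, K)\<close> a solution of the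
     CTS-H* system; the embedding needs merely that the mean curvature is smooth and 1-periodic.\<close>
proof -
  define r where "r = c powr ((2 * real n / (real n - 2) - 2) / 2)"
  define rl where "rl = (\<lambda>k. r * l k)"
  define \<tau> where "\<tau> = (\<lambda>x. \<tau>s + c powr (- 2 * (2 * real n / (real n - 2))) * \<xi> x)"
  define vol where "vol = (\<Prod>k\<in>{1..n}. rl k)"
  have "n \<ge> 1" "c > 0"
    using n3 cases by auto
  then have "rl 1 > 0" "vol > 0"
    using lpos by (auto simp: vol_def rl_def r_def intro!: prod_pos)
  have smooth: "smooth_real \<tau>"
    unfolding \<tau>_def by (intro smooth_real_add smooth_real_mult smooth_real_const xi_smooth)
  have periodic: "\<tau> (s + 1) = \<tau> s" for s
    using xi_per by (simp add: \<tau>_def)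
  define \<tau>\<^sub>0 where "\<tau>\<^sub>0 = torus_integral n rl (\<lambda>s. \<tau> (s 1)) / torus_integral n rl (\<lambda>s. 1)"
  have "\<tau>\<^sub>0 = integral {0..1} \<tau>"
    using torus_integral_first_coordinate[OF \<open>n \<ge> 1\<close> smooth_real_continuous_on[OF smooth], of rl]
      torus_integral_first_coordinate[OF \<open>n \<ge> 1\<close>, of "\<lambda>_. 1" rl] \<open>vol > 0\<close>
    unfolding \<tau>\<^sub>0_def vol_def[symmetric] by simp
  then have "(\<tau>\<^sub>0 \<noteq> 0 \<longrightarrow> (\<exists>\<gamma>. kasner_curve (rl 1 * \<tau>\<^sub>0) \<gamma> \<and>
                  sp_induces n rl \<gamma> (\<lambda>i j s. torus_metric n rl i j)
                    (\<lambda>i j s. if i = 1 \<and> j = 1 then \<tau> (s 1) * (rl 1)\<^sup>2 else 0)))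
      \<and> (\<tau>\<^sub>0 = 0 \<longrightarrow> (\<exists>L \<gamma>. L > 0 \<and> cylinder_curve L \<gamma> \<and>
                  sp_induces n rl \<gamma> (\<lambda>i j s. torus_metric n rl i j)
                    (\<lambda>i j s. if i = 1 \<and> j = 1 then \<tau> (s 1) * (rl 1)\<^sup>2 else 0)))"
    using exists_kasner_embedding[OF \<open>rl 1 > 0\<close> smooth periodic _ \<open>n \<ge> 1\<close>]
      exists_cylinder_embedding[OF \<open>rl 1 > 0\<close> smooth periodic _ \<open>n \<ge> 1\<close>] \<open>rl 1 > 0\<close>
    by auto
  then show ?thesis
    unfolding Let_def \<tau>\<^sub>0_def \<tau>_def rl_def r_def .
qed

end
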